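(* Fix $y\in X$ and $f\in P_k$. Suppose there are polynomials $p_1,\dotsc,p_M$ of degree $k$ on $\mathbb{R}^{n(n-1)/2}$, each taking only the values $0$ or $1$ on $X$, and positive constants $b_k < c_k$ such that for every pair of distinct $i,j\in\{1,\dotsc,n\}$, \[ \sum_{x\in X:\ \{i,j\}\in x}\ \sum_{\ell=1}^{M} p_\ell(x) = \begin{cases} b_k & \text{if } \{i,j\}\notin y,\\ c_k & \text{if } \{i,j\}\in y.\end{cases} \] Then $-\frac{b_k(n-1)}{2(c_k-b_k)} \le f(y)$.
   Context: Let $N=n(n-1)/2$, coordinates of $\mathbb{R}^N$ indexed by unordered pairs $\{i,j\}$ of distinct elements of $\{1,\dotsc,n\}$. Let $X\subset\mathbb{R}^N$ be the set of incidence vectors of Hamiltonian cycles of $K_n$; for $x\in X$, "$\{i,j\}\in x$" means the cycle $x$ contains edge $\{i,j\}$. $P_k$ is the set of functions $f:X\to\mathbb{R}$ that are restrictions of linear functions on $\mathbb{R}^N$, have average value $1$ on $X$, and such that $q_f(h)=\frac{1}{|X|}\sum_{x\in X}f(x)h(x)^2\ge 0$ for every polynomial $h$ of degree at most $k$ on $\mathbb{R}^N$. *)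

theory Defs
  imports Complex_Main "HOL-Library.Multiset"
begin

text \<open>Vertices are 1..n. A point of R^N is a function from unordered pairs
(two-element sets of vertices) to real; only the coordinates indexed by
edges of K_n matter.\<close>

type_synonym point = "nat set \<Rightarrow> real"

definition edges :: "nat \<Rightarrow> nat set set" where
  "edges n = {{i, j} | i j. i \<in> {1..n} \<and> j \<in> {1..n} \<and> i \<noteq> j}"

definition ham_cycles :: "nat \<Rightarrow> nat set set set" where
  "ham_cycles n = {{{vs ! i, vs ! ((i + 1) mod n)} | i. i < n} | vs.
       n \<ge> 3 \<and> distinct vs \<and> set vs = {1..n} \<and> length vs = n}"

definition HC :: "nat \<Rightarrow> point set" where
  "HC n = {(\<lambda>e. if e \<in> C then 1 else 0) | C. C \<in> ham_cycles n}"

text \<open>Polynomial functions of degree at most k on R^N: finite linear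
combinations of monomials, a monomial being a multiset of coordinates.\<close>
definition poly_deg_le :: "nat \<Rightarrow> nat \<Rightarrow> (point \<Rightarrow> real) \<Rightarrow> bool" where
  "poly_deg_le n k h \<longleftrightarrow> (\<exists>S coef. finite S \<and>
     (\<forall>m\<in>S. set_mset m \<subseteq> edges n \<and> size m \<le> k) \<and>
     (\<forall>x. h x = (\<Sum>m\<in>S. coef m * (\<Prod>e\<in>#m. x e))))"

definition qf :: "nat \<Rightarrow> (point \<Rightarrow> real) \<Rightarrow> (point \<Rightarrow> real) \<Rightarrow> real" where
  "qf n f h = (1 / real (card (HC n))) * (\<Sum>x\<in>HC n. f x * (h x)^2)"

definition Pk :: "nat \<Rightarrow> nat \<Rightarrow> (point \<Rightarrow> real) set" where
  "Pk n k = {f. (\<exists>a. \<forall>x\<in>HC n. f x = (\<Sum>e\<in>edges n. a e * x e)) \<and>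
     (1 / real (card (HC n))) * (\<Sum>x\<in>HC n. f x) = 1 \<and>
     (\<forall>h. poly_deg_le n k h \<longrightarrow> qf n f h \<ge> 0)}"

end

theory Submission
  imports Defs "HOL-Combinatorics.Permutations"
begin

text \<open>Each p_l is 0/1-valued on X, so p_l^2 = p_l there and q_f(p_l) >= 0 reads
  \<Sum>_X f p_l >= 0. Summing over l and writing f = \<Sum>_e a_e x_e, the hypothesis turns
  \<Sum>_X f (\<Sum>_l p_l) into b \<Sum>_e a_e + (c - b) f(y). Vertex permutations act
  edge-transitively on K_n and preserve Hamiltonian cycles, so every edge lies in the same
  number K of them; counting edge-cycle incidences gives K n(n-1)/2 = n |X|, and the average
  condition then forces \<Sum>_e a_e = (n-1)/2.\<close>

definition incidence :: "nat set set \<Rightarrow> point" where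
  "incidence C = (\<lambda>e. if e \<in> C then 1 else 0)"

lemma HC_eq_image_incidence: "HC n = incidence ` ham_cycles n"
  unfolding HC_def incidence_def by auto

lemma inj_incidence: "inj incidence"
proof (rule injI)
  fix C D assume "incidence C = incidence D"
  then show "C = D"
    unfolding incidence_def by (metis (mono_tags) one_neq_zero set_eqI)
qed

lemma incidence_eq_1_iff [simp]: "incidence C e = 1 \<longleftrightarrow> e \<in> C"
  by (simp add: incidence_def)

lemma HC_values_01: "\<forall>x\<in>HC n. \<forall>e. x e = 0 \<or> x e = 1"
  unfolding HC_def by auto

lemma card_HC: "card (HC n) = card (ham_cycles n)"
  unfolding HC_eq_image_incidence using inj_incidence by (simp add: card_image inj_on_subset)

lemma card_HC_filter: "card {x \<in> HC n. P x} = card {C \<in> ham_cycles n. P (incidence C)}"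
proof -
  have "{x \<in> HC n. P x} = incidence ` {C \<in> ham_cycles n. P (incidence C)}"
    unfolding HC_eq_image_incidence by blast
  then show ?thesis
    using inj_incidence by (simp add: card_image inj_on_subset)
qed

lemma ham_cycleE:
  assumes "C \<in> ham_cycles n"
  obtains vs where "C = (\<lambda>i. {vs ! i, vs ! ((i + 1) mod n)}) ` {..<n}"
    and "n \<ge> 3" and "distinct vs" and "set vs = {1..n}" and "length vs = n"
  using assms unfolding ham_cycles_def lessThan_def by (auto simp: setcompr_eq_image)

lemma ham_cyclesI:
  assumes "n \<ge> 3" "distinct vs" "set vs = {1..n}" "length vs = n"
  shows "(\<lambda>i. {vs ! i, vs ! ((i + 1) mod n)}) ` {..<n} \<in> ham_cycles n"
  using assms unfolding ham_cycles_def lessThan_def by (auto simp: setcompr_eq_image)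

lemma successor_mod_not_involution:
  assumes "i < n" "j < n" "3 \<le> (n::nat)" "i = (j + 1) mod n" "j = (i + 1) mod n"
  shows False
proof (cases "j + 1 = n")
  case True
  then have "i = 0" using assms(4) by simp
  then have "j = 1" using assms(3,5) by simp
  then show False using True assms(3) by simp
next
  case False
  then have i: "i = j + 1" using assms(2,4) by simp
  show False
  proof (cases "i + 1 = n")
    case True
    then have "j = 0" using assms(5) by simp
    then show False using i True assms(3) by simp
  next
    case False
    then have "j = i + 1" using assms(1,5) by simp
    then show False using i by simp
  qed
qed

lemma ham_cycle_subset_edges:
  assumes "C \<in> ham_cycles n"
  shows "C \<subseteq> edges n"
proof -
  obtain vs where C: "C = (\<lambda>i. {vs ! i, vs ! ((i + 1) mod n)}) ` {..<n}"
    and n: "n \<ge> 3" and vs: "distinct vs" "set vs = {1..n}" "length vs = n"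
    using assms by (rule ham_cycleE)
  have "{vs ! i, vs ! ((i + 1) mod n)} \<in> edges n" if "i < n" for i
  proof -
    have "(i + 1) mod n < n" "(i + 1) mod n \<noteq> i"
      using that n by (auto simp: mod_if)
    then have "vs ! i \<noteq> vs ! ((i + 1) mod n)"
      using that vs by (simp add: nth_eq_iff_index_eq)
    moreover have "vs ! i \<in> {1..n}" "vs ! ((i + 1) mod n) \<in> {1..n}"
      using \<open>(i + 1) mod n < n\<close> that vs by (metis nth_mem)+
    ultimately show ?thesis
      unfolding edges_def by blast
  qed
  then show ?thesis
    unfolding C by blast
qed

lemma card_ham_cycle:
  assumes "C \<in> ham_cycles n"
  shows "card C = n"
proof -
  obtain vs where C: "C = (\<lambda>i. {vs ! i, vs ! ((i + 1) mod n)}) ` {..<n}"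
    and n: "n \<ge> 3" and vs: "distinct vs" "length vs = n"
    using assms by (rule ham_cycleE)
  have index_eq: "vs ! i = vs ! j \<longleftrightarrow> i = j" if "i < n" "j < n" for i j
    using that vs by (simp add: nth_eq_iff_index_eq)
  have succ: "(i + 1) mod n < n" for i
    using n by simp
  have "inj_on (\<lambda>i. {vs ! i, vs ! ((i + 1) mod n)}) {..<n}"
  proof (rule inj_onI)
    fix i j assume "i \<in> {..<n}" "j \<in> {..<n}"
      and "{vs ! i, vs ! ((i + 1) mod n)} = {vs ! j, vs ! ((j + 1) mod n)}"
    then have i: "i < n" and j: "j < n"
      and "vs ! i = vs ! j \<or> (vs ! i = vs ! ((j + 1) mod n) \<and> vs ! ((i + 1) mod n) = vs ! j)"
      unfolding doubleton_eq_iff by auto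
    then show "i = j"
    proof (elim disjE conjE)
      assume "vs ! i = vs ! ((j + 1) mod n)" "vs ! ((i + 1) mod n) = vs ! j"
      then have "i = (j + 1) mod n" "j = (i + 1) mod n"
        using index_eq i j succ by auto
      then show ?thesis
        using successor_mod_not_involution i j n by blast
    qed (use index_eq i j in simp)
  qed
  then show ?thesis
    unfolding C by (simp add: card_image)
qed

lemma finite_edges: "finite (edges n)"
  by (rule finite_subset[of _ "Pow {1..n}"]) (auto simp: edges_def)

lemma finite_ham_cycles: "finite (ham_cycles n)"
  by (rule finite_subset[of _ "Pow (edges n)"]) (use ham_cycle_subset_edges finite_edges in auto)

lemma finite_HC: "finite (HC n)"
  by (simp add: HC_eq_image_incidence finite_ham_cycles)

lemma edges_eq: "edges n = {B. B \<subseteq> {1..n} \<and> card B = 2}"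
  unfolding edges_def card_2_iff by blast

lemma double_card_edges: "2 * card (edges n) = n * (n - 1)"
proof -
  have "even (n * (n - 1))"
    by (cases "even n") auto
  then show ?thesis
    by (simp add: edges_eq n_subsets choose_two)
qed

lemma permutes_ham_cycle:
  assumes "\<sigma> permutes {1..n}" "C \<in> ham_cycles n"
  shows "image \<sigma> ` C \<in> ham_cycles n"
proof -
  obtain vs where C: "C = (\<lambda>i. {vs ! i, vs ! ((i + 1) mod n)}) ` {..<n}"
    and n: "n \<ge> 3" and vs: "distinct vs" "set vs = {1..n}" "length vs = n"
    using assms(2) by (rule ham_cycleE)
  let ?ws = "map \<sigma> vs"
  have "image \<sigma> ` C = (\<lambda>i. {?ws ! i, ?ws ! ((i + 1) mod n)}) ` {..<n}"
    unfolding C image_image using n vs by (intro image_cong) auto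
  moreover have "distinct ?ws"
    using vs permutes_inj[OF assms(1)] by (simp add: distinct_map inj_def inj_on_def)
  moreover have "set ?ws = {1..n}"
    using vs permutes_image[OF assms(1)] by simp
  ultimately show ?thesis
    using ham_cyclesI[of n ?ws] n vs(3) by simp
qed

lemma edges_transitive:
  assumes "e \<in> edges n" "e' \<in> edges n"
  obtains \<sigma> where "\<sigma> permutes {1..n}" "\<sigma> ` e = e'"
proof -
  obtain i j where e: "e = {i, j}" "i \<in> {1..n}" "j \<in> {1..n}" "i \<noteq> j"
    using assms(1) unfolding edges_def by blast
  obtain i' j' where e': "e' = {i', j'}" "i' \<in> {1..n}" "j' \<in> {1..n}" "i' \<noteq> j'"
    using assms(2) unfolding edges_def by blast
  define j'' where "j'' = transpose i i' j"
  have j'': "j'' \<in> {1..n}" "j'' \<noteq> i'"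
    using e e'(2) by (auto simp: j''_def transpose_def)
  let ?\<sigma> = "transpose j'' j' \<circ> transpose i i'"
  have "?\<sigma> permutes {1..n}"
    using e e' j'' by (intro permutes_compose permutes_swap_id)
  moreover have "?\<sigma> ` e = e'"
    using e e' j'' by (auto simp: j''_def image_comp[symmetric] transpose_def)
  ultimately show ?thesis by (rule that)
qed

lemma card_ham_cycles_through_edge_le:
  assumes "e \<in> edges n" "e' \<in> edges n"
  shows "card {C \<in> ham_cycles n. e \<in> C} \<le> card {C \<in> ham_cycles n. e' \<in> C}"
proof -
  obtain \<sigma> where \<sigma>: "\<sigma> permutes {1..n}" "\<sigma> ` e = e'"
    using assms by (rule edges_transitive)
  have "inj (image (image \<sigma>))"
    using permutes_inj[OF \<sigma>(1)] by (meson injI inj_image_eq_iff)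
  moreover have "image (image \<sigma>) ` {C \<in> ham_cycles n. e \<in> C} \<subseteq> {C \<in> ham_cycles n. e' \<in> C}"
    using permutes_ham_cycle[OF \<sigma>(1)] \<sigma>(2) by blast
  ultimately show ?thesis
    using finite_ham_cycles by (intro card_inj_on_le[OF inj_on_subset]) auto
qed

lemma card_ham_cycles_through_edge_eq:
  assumes "e \<in> edges n" "e' \<in> edges n"
  shows "card {C \<in> ham_cycles n. e \<in> C} = card {C \<in> ham_cycles n. e' \<in> C}"
  using card_ham_cycles_through_edge_le[OF assms] card_ham_cycles_through_edge_le[OF assms(2,1)]
  by (rule antisym)

lemma card_ham_cycles_through_edge:
  assumes "e \<in> edges n"
  shows "card {C \<in> ham_cycles n. e \<in> C} * (n - 1) = 2 * card (ham_cycles n)"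
proof (cases "ham_cycles n = {}")
  case True
  then show ?thesis by simp
next
  case False
  then obtain C where "C \<in> ham_cycles n" by blast
  then have n: "n \<ge> 3"
    by (rule ham_cycleE)
  let ?K = "card {C \<in> ham_cycles n. e \<in> C}"
  have "(\<Sum>C\<in>ham_cycles n. card {e' \<in> edges n. e' \<in> C}) = ?K * card (edges n)"
    by (intro sum_multicount finite_ham_cycles finite_edges ballI card_ham_cycles_through_edge_eq assms)
  moreover have "card {e' \<in> edges n. e' \<in> C} = n" if "C \<in> ham_cycles n" for C
  proof -
    have "{e' \<in> edges n. e' \<in> C} = C"
      using ham_cycle_subset_edges[OF that] by blast
    then show ?thesis
      using card_ham_cycle[OF that] by simp
  qed
  ultimately have "n * card (ham_cycles n) = ?K * card (edges n)"
    by (simp add: mult.commute)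
  then have "n * (2 * card (ham_cycles n)) = ?K * (2 * card (edges n))"
    by (simp only: mult_ac)
  also have "\<dots> = n * (?K * (n - 1))"
    unfolding double_card_edges by (simp only: mult_ac)
  finally show ?thesis
    using n by simp
qed

lemma sum_linear_form_times:
  fixes S :: "point set" and a :: "nat set \<Rightarrow> real"
  assumes "finite S" "\<forall>x\<in>S. \<forall>e. x e = 0 \<or> x e = 1"
  shows "(\<Sum>x\<in>S. (\<Sum>e\<in>E. a e * x e) * g x) = (\<Sum>e\<in>E. a e * (\<Sum>x\<in>{x\<in>S. x e = 1}. g x))"
proof -
  have "(\<Sum>x\<in>S. (\<Sum>e\<in>E. a e * x e) * g x) = (\<Sum>e\<in>E. a e * (\<Sum>x\<in>S. x e * g x))"
    by (simp add: sum_distrib_left sum_distrib_right sum.swap[of _ S] mult.assoc)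
  also have "\<dots> = (\<Sum>e\<in>E. a e * (\<Sum>x\<in>S. if x e = 1 then g x else 0))"
    using assms(2) by (intro sum.cong refl arg_cong2[where f = "(*)"]) force+
  finally show ?thesis
    using assms(1) by (simp add: sum.inter_filter)
qed

lemma card_HC_through_edge:
  assumes "e \<in> edges n"
  shows "real (card {x \<in> HC n. x e = 1}) * (real n - 1) = 2 * real (card (HC n))"
proof -
  have "card {x \<in> HC n. x e = 1} * (n - 1) = 2 * card (HC n)"
    using card_ham_cycles_through_edge[OF assms] by (simp add: card_HC card_HC_filter)
  then have "real (card {x \<in> HC n. x e = 1} * (n - 1)) = real (2 * card (HC n))"
    by (simp only:)
  moreover have "n \<ge> 1"
    using assms unfolding edges_def by auto
  ultimately show ?thesis
    by (simp add: of_nat_diff)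
qed

lemma sum_coeffs_if_average_one:
  assumes "HC n \<noteq> {}"
    and f: "\<forall>x\<in>HC n. f x = (\<Sum>e\<in>edges n. a e * x e)"
    and avg: "(1 / real (card (HC n))) * (\<Sum>x\<in>HC n. f x) = 1"
  shows "(\<Sum>e\<in>edges n. a e) = (real n - 1) / 2"
proof -
  define N where "N = real (card (HC n))"
  have "N > 0"
    using assms(1) finite_HC by (simp add: N_def card_gt_0_iff)
  then have "(real n - 1) * N = (real n - 1) * (\<Sum>x\<in>HC n. (\<Sum>e\<in>edges n. a e * x e) * 1)"
    using avg f unfolding N_def by (simp add: field_simps)
  also have "\<dots> = (\<Sum>e\<in>edges n. a e * (real (card {x \<in> HC n. x e = 1}) * (real n - 1)))"
    unfolding sum_linear_form_times[OF finite_HC HC_values_01]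
    by (simp add: sum_distrib_left mult_ac)
  also have "\<dots> = (\<Sum>e\<in>edges n. a e * (2 * N))"
    unfolding N_def by (intro sum.cong refl) (simp add: card_HC_through_edge)
  also have "\<dots> = 2 * N * (\<Sum>e\<in>edges n. a e)"
    by (simp add: sum_distrib_left mult_ac)
  finally have "N * (real n - 1) = N * (2 * (\<Sum>e\<in>edges n. a e))"
    by (simp only: mult_ac)
  then show ?thesis
    using \<open>N > 0\<close> by simp
qed

lemma Pk_sum_mult_01_poly_nonneg:
  assumes "f \<in> Pk n k" "poly_deg_le n k p" "\<forall>x\<in>HC n. p x = 0 \<or> p x = 1"
  shows "0 \<le> (\<Sum>x\<in>HC n. f x * p x)"
proof (cases "HC n = {}")
  case False
  then have "0 < real (card (HC n))"
    using finite_HC by (simp add: card_gt_0_iff)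
  moreover have "0 \<le> (1 / real (card (HC n))) * (\<Sum>x\<in>HC n. f x * (p x)\<^sup>2)"
    using assms(1,2) unfolding Pk_def qf_def by blast
  moreover have "(\<Sum>x\<in>HC n. f x * (p x)\<^sup>2) = (\<Sum>x\<in>HC n. f x * p x)"
    using assms(3) by (intro sum.cong) auto
  ultimately show ?thesis
    by (simp add: zero_le_divide_iff)
qed simp

lemma sum_linear_form_mult_eq:
  assumes "y \<in> HC n"
    and f: "\<forall>x\<in>HC n. f x = (\<Sum>e\<in>edges n. a e * x e)"
    and g: "\<forall>e\<in>edges n. (\<Sum>x\<in>{x\<in>HC n. x e = 1}. g x) = b + (c - b) * y e"
  shows "(\<Sum>x\<in>HC n. f x * g x) = b * (\<Sum>e\<in>edges n. a e) + (c - b) * f y"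
proof -
  have "(\<Sum>x\<in>HC n. f x * g x) = (\<Sum>x\<in>HC n. (\<Sum>e\<in>edges n. a e * x e) * g x)"
    using f by simp
  also have "\<dots> = (\<Sum>e\<in>edges n. a e * (b + (c - b) * y e))"
    unfolding sum_linear_form_times[OF finite_HC HC_values_01] using g by simp
  also have "\<dots> = b * (\<Sum>e\<in>edges n. a e) + (c - b) * f y"
    using f assms(1) by (simp add: distrib_left sum.distrib sum_distrib_left mult_ac)
  finally show ?thesis .
qed

theorem lemma1:
  fixes n k M :: nat and y :: point and f :: "point \<Rightarrow> real"
    and p :: "nat \<Rightarrow> point \<Rightarrow> real" and b c :: real
  assumes "y \<in> HC n"
    and "f \<in> Pk n k"
    and "\<forall>l\<in>{1..M}. poly_deg_le n k (p l)"
    and "\<forall>l\<in>{1..M}. \<forall>x\<in>HC n. p l x = 0 \<or> p l x = 1"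
    and "0 < b" and "b < c"
    and "\<forall>i\<in>{1..n}. \<forall>j\<in>{1..n}. i \<noteq> j \<longrightarrow>
           (\<Sum>x\<in>{x\<in>HC n. x {i, j} = 1}. \<Sum>l=1..M. p l x)
             = (if y {i, j} = 1 then c else b)"
  shows "- (b * (real n - 1)) / (2 * (c - b)) \<le> f y"
proof -
  obtain a where f: "\<forall>x\<in>HC n. f x = (\<Sum>e\<in>edges n. a e * x e)"
    and avg: "(1 / real (card (HC n))) * (\<Sum>x\<in>HC n. f x) = 1"
    using assms(2) unfolding Pk_def by blast
  have through_y: "\<forall>e\<in>edges n. (\<Sum>x\<in>{x\<in>HC n. x e = 1}. \<Sum>l=1..M. p l x) = b + (c - b) * y e"
  proof
    fix e assume "e \<in> edges n"
    moreover have "y e = 0 \<or> y e = 1"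
      using HC_values_01 assms(1) by blast
    ultimately show "(\<Sum>x\<in>{x\<in>HC n. x e = 1}. \<Sum>l=1..M. p l x) = b + (c - b) * y e"
      using assms(7) unfolding edges_def by auto
  qed
  have "0 \<le> (\<Sum>l=1..M. \<Sum>x\<in>HC n. f x * p l x)"
    using assms(2-4) by (intro sum_nonneg Pk_sum_mult_01_poly_nonneg) auto
  also have "\<dots> = (\<Sum>x\<in>HC n. f x * (\<Sum>l=1..M. p l x))"
    unfolding sum_distrib_left by (rule sum.swap)
  also have "\<dots> = b * ((real n - 1) / 2) + (c - b) * f y"
    using sum_linear_form_mult_eq[OF assms(1) f through_y] sum_coeffs_if_average_one[OF _ f avg] assms(1)
    by auto
  finally have "- (b * (real n - 1)) \<le> f y * (2 * (c - b))"
    by (simp add: field_simps)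
  then show ?thesis
    using assms(6) by (subst pos_divide_le_eq) auto
qed

end
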